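(* Let $\pi_1,\pi_2:\mathbb P^3\dashrightarrow\mathbb P^2$ be linear projections with non-coincident centers $c_1,c_2$. A permissible quadric $Q$ through $c_1,c_2$ defines a (non-degenerate quadratic) Cremona transformation $f:\mathbb P^2\dashrightarrow\mathbb P^2$ such that $f(\pi_1(p))=\pi_2(p)$ for every point $p\in Q$ (where defined). The base points of $f$ are $\pi_1(c_2)$ and the images under $\pi_1$ of the two lines contained in $Q$ passing through $c_1$. Similarly, the base points of $f^{-1}$ are $\pi_2(c_1)$ and the images under $\pi_2$ of the two lines contained in $Q$ passing through $c_2$.
   Context: Work over $\mathbb C$. A linear projection $\pi:\mathbb P^3\dashrightarrow\mathbb P^2$ is $p\mapsto Ap$, $A\in\mathbb C^{3\times4}$ of rank three, with center spanning $\ker A$. A permissible quadric (for centers $c_1\ne c_2$) is a smooth quadric surface containing $c_1,c_2$ but not containing the line $\overline{c_1c_2}$. A quadratic Cremona transformation is a birational map $\mathbb P^2\dashrightarrow\mathbb P^2$ given by three homogeneous quadrics; it has three base points and three exceptional lines, and is non-degenerate if these are distinct. *)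

theory Defs
  imports "HOL-Analysis.Analysis"
begin

text \<open>Points of projective space P^(n-1) over C are represented by nonzero vectors
  of complex^n; the projective point of a nonzero vector v is its class of
  nonzero scalar multiples.\<close>

definition proj_class :: "complex^'n \<Rightarrow> (complex^'n) set" where
  "proj_class v = {c *s v | c. c \<noteq> 0}"

definition qform :: "complex^'n^'n \<Rightarrow> complex^'n \<Rightarrow> complex" where
  "qform M x = (\<Sum>i\<in>UNIV. x $ i * (M *v x) $ i)"

definition linear_projection :: "complex^4^3 \<Rightarrow> complex^4 \<Rightarrow> bool" where
  "linear_projection A c \<longleftrightarrow> rank A = 3 \<and> c \<noteq> 0 \<and> A *v c = 0"

definition smooth_quadric :: "complex^4^4 \<Rightarrow> bool" where
  "smooth_quadric M \<longleftrightarrow> transpose M = M \<and> det M \<noteq> 0"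

definition on_quadric :: "complex^4^4 \<Rightarrow> complex^4 \<Rightarrow> bool" where
  "on_quadric M p \<longleftrightarrow> p \<noteq> 0 \<and> qform M p = 0"

definition permissible_quadric :: "complex^4^4 \<Rightarrow> complex^4 \<Rightarrow> complex^4 \<Rightarrow> bool" where
  "permissible_quadric M c1 c2 \<longleftrightarrow> smooth_quadric M \<and> qform M c1 = 0 \<and> qform M c2 = 0
     \<and> \<not> (\<forall>a b. qform M (a *s c1 + b *s c2) = 0)"

definition line_in_quadric :: "complex^4^4 \<Rightarrow> complex^4 \<Rightarrow> complex^4 \<Rightarrow> bool" where
  "line_in_quadric M c d \<longleftrightarrow> (\<forall>a. d \<noteq> a *s c) \<and> (\<forall>a b. qform M (a *s c + b *s d) = 0)"

text \<open>A quadratic map P^2 --> P^2 given by three homogeneous quadrics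
  (each given by a symmetric 3x3 matrix).\<close>
definition quad_map :: "complex^3^3^3 \<Rightarrow> bool" where
  "quad_map F \<longleftrightarrow> (\<forall>k. transpose (F $ k) = F $ k)"

definition cmap :: "complex^3^3^3 \<Rightarrow> complex^3 \<Rightarrow> complex^3" where
  "cmap F x = (\<chi> k. qform (F $ k) x)"

definition inverse_rational :: "complex^3^3^3 \<Rightarrow> complex^3^3^3 \<Rightarrow> bool" where
  "inverse_rational F G \<longleftrightarrow>
     (\<forall>x. \<exists>c. cmap G (cmap F x) = c *s x) \<and> (\<exists>x. cmap G (cmap F x) \<noteq> 0) \<and>
     (\<forall>y. \<exists>c. cmap F (cmap G y) = c *s y) \<and> (\<exists>y. cmap F (cmap G y) \<noteq> 0)"

definition quad_cremona :: "complex^3^3^3 \<Rightarrow> complex^3^3^3 \<Rightarrow> bool" where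
  "quad_cremona F G \<longleftrightarrow> quad_map F \<and> quad_map G \<and> inverse_rational F G"

definition base_points :: "complex^3^3^3 \<Rightarrow> (complex^3) set set" where
  "base_points F = {proj_class x | x. x \<noteq> 0 \<and> cmap F x = 0}"

definition nondegenerate :: "complex^3^3^3 \<Rightarrow> bool" where
  "nondegenerate F \<longleftrightarrow> card (base_points F) = 3"

end

(* Lifting a point x of P^2 through the first projection gives a line through the
   center c1, which meets Q once more in a point depending quadratically on x; projecting
   that point from c2 defines f.  For p on Q the line through c1 and p meets Q again in p,
   so f is compatible with the projections on Q.  Since the second intersection point
   always lies on Q, applying the map g obtained by exchanging the two projections returns
   a multiple of x, so f and g are mutually inverse.  The base points of f are the x whose
   second intersection point is the center c2, i.e. the image of c2, and those whose line
   lies on Q, i.e. the images of the two rulings of Q through c1; in a frame c1, c2, u, v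
   adapted to Q these rulings are spanned by c1 and v + i u, v - i u. *)

theory Submission
  imports Defs
begin

section \<open>Bilinear forms of matrices\<close>

definition vdot :: "'a::comm_ring_1^'n \<Rightarrow> 'a^'n \<Rightarrow> 'a" where
  "vdot x y = (\<Sum>i\<in>UNIV. x $ i * y $ i)"

definition bform :: "'a::comm_ring_1^'n^'n \<Rightarrow> 'a^'n \<Rightarrow> 'a^'n \<Rightarrow> 'a" where
  "bform M x y = vdot x (M *v y)"

lemma vdot_linear_left [simp]:
  "vdot (x + y) z = vdot x z + vdot y z" "vdot (x - y) z = vdot x z - vdot y z"
  "vdot (- x) z = - vdot x z" "vdot (a *s x) z = a * vdot x z" "vdot 0 z = 0"
  by (simp_all add: vdot_def sum.distrib sum_subtractf sum_negf sum_distrib_left algebra_simps)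

lemma vdot_linear_right [simp]:
  "vdot z (x + y) = vdot z x + vdot z y" "vdot z (x - y) = vdot z x - vdot z y"
  "vdot z (- x) = - vdot z x" "vdot z (a *s x) = a * vdot z x" "vdot z 0 = 0"
  by (simp_all add: vdot_def sum.distrib sum_subtractf sum_negf sum_distrib_left algebra_simps)

lemma vdot_commute: "vdot x y = vdot y x"
  by (simp add: vdot_def mult.commute)

lemma vdot_matrix_vector_mult: "vdot x (A *v y) = vdot (transpose A *v x) y"
proof -
  have "vdot x (A *v y) = (\<Sum>i\<in>UNIV. \<Sum>j\<in>UNIV. x $ i * (A $ i $ j * y $ j))"
    by (simp add: vdot_def matrix_vector_mult_def sum_distrib_left)
  also have "\<dots> = (\<Sum>j\<in>UNIV. \<Sum>i\<in>UNIV. x $ i * (A $ i $ j * y $ j))"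
    by (rule sum.swap)
  also have "\<dots> = vdot (transpose A *v x) y"
    by (simp add: vdot_def matrix_vector_mult_def transpose_def sum_distrib_left algebra_simps)
  finally show ?thesis .
qed

lemma matrix_vector_mult_nth_vdot: "(A *v x) $ k = vdot (A $ k) x"
  by (simp add: matrix_vector_mult_def vdot_def)

lemma bform_linear_left [simp]:
  "bform M (x + y) z = bform M x z + bform M y z" "bform M (x - y) z = bform M x z - bform M y z"
  "bform M (- x) z = - bform M x z" "bform M (a *s x) z = a * bform M x z" "bform M 0 z = 0"
  by (simp_all add: bform_def)

lemma bform_linear_right [simp]:
  "bform M z (x + y) = bform M z x + bform M z y" "bform M z (x - y) = bform M z x - bform M z y"
  "bform M z (- x) = - bform M z x" "bform M z (a *s x) = a * bform M z x" "bform M z 0 = 0"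
  by (simp_all add: bform_def vdot_matrix_vector_mult)

lemma bform_orthogonal_span:
  assumes "\<forall>y\<in>S. bform M w y = 0" and "x \<in> vec.span S"
  shows "bform M w x = 0"
  by (rule vec.span_induct[OF assms(2)]) (auto simp: vec.subspace_def assms(1))

lemma bform_commute: "transpose M = M \<Longrightarrow> bform M x y = bform M y x"
  by (metis bform_def vdot_commute vdot_matrix_vector_mult)

lemma qform_eq_bform: "qform M x = bform M x x"
  by (simp add: qform_def bform_def vdot_def)

lemma bform_nondegenerate:
  fixes M :: "'a::field^'n^'n"
  assumes "det M \<noteq> 0" and "\<And>y. bform M y w = 0"
  shows "w = 0"
proof -
  have "axis i 1 $ j * (M *v w) $ j = (if j = i then (M *v w) $ j else 0)" for i j
    by (simp add: axis_def)
  then have "(M *v w) $ i = bform M (axis i 1) w" for i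
    by (simp add: bform_def vdot_def)
  then have "M *v w = 0"
    using assms(2) by (simp add: vec_eq_iff)
  then show ?thesis
    using assms(1) by (metis invertible_det_nz invertible_left_inverse matrix_vector_mul_assoc
        matrix_vector_mul_lid matrix_vector_mult_0_right)
qed

section \<open>Matrices of full row rank\<close>

lemma full_row_rank_right_invertible:
  fixes A :: "'a::field^'n^'m"
  assumes "rank A = CARD('m)"
  shows "\<exists>S. A ** S = mat 1"
proof (rule ccontr)
  assume "\<nexists>S. A ** S = mat 1"
  then obtain c i where dep: "(\<Sum>j\<in>UNIV. c j *s row j A) = 0" and "c i \<noteq> 0"
    unfolding matrix_right_invertible_independent_rows by blast
  let ?R = "(\<lambda>j. row j A) ` (UNIV - {i})"
  have "c i *s row i A = - (\<Sum>j\<in>UNIV - {i}. c j *s row j A)"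
    using dep by (simp add: sum.remove[of UNIV i] eq_neg_iff_add_eq_0)
  then have "(1 / c i) *s (c i *s row i A) = (- 1 / c i) *s (\<Sum>j\<in>UNIV - {i}. c j *s row j A)"
    by (simp add: vector_smult_lneg del: vector_smult_assoc)
  then have "row i A = (- 1 / c i) *s (\<Sum>j\<in>UNIV - {i}. c j *s row j A)"
    using \<open>c i \<noteq> 0\<close> by (simp add: vector_smult_assoc)
  also have "\<dots> \<in> vec.span ?R"
    by (intro vec.span_scale vec.span_sum) (auto intro: vec.span_base)
  finally have "rows A \<subseteq> vec.span ?R"
    by (auto simp: rows_def intro: vec.span_base)
  then have "rank A \<le> card ?R"
    unfolding row_rank_def_gen by (rule vec.dim_le_card) simp
  also have "\<dots> \<le> card (UNIV - {i})"
    by (rule card_image_le) simp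
  also have "\<dots> < CARD('m)"
    by (rule card_Diff1_less) simp_all
  finally show False using assms by simp
qed

lemma right_invertible_kernel_is_line:
  fixes A :: "'a::field^'n^'m" and S :: "'a^'m^'n"
  assumes "A ** S = mat 1" and "CARD('n) = CARD('m) + 1"
    and "A *v c = 0" and "c \<noteq> 0" and "A *v x = 0"
  shows "\<exists>k. x = k *s c"
proof (rule ccontr)
  assume not_multiple: "\<nexists>k. x = k *s c"
  let ?R = "range ((*v) S)"
  have AS: "A *v (S *v y) = y" for y
    by (simp add: matrix_vector_mul_assoc assms(1))
  have span_R: "vec.span ?R = ?R"
    by (simp add: vec.subspace_image)
  have "CARD('m) = vec.dim ((*v) A ` ?R)"
    by (simp add: image_image AS card_cart_basis)
  also have "\<dots> \<le> vec.dim ?R"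
    by (rule vec.dim_image_le) (rule matrix_vector_mul_linear_gen)
  finally have dim_R: "CARD('m) \<le> vec.dim ?R" .
  have "c \<notin> vec.span ?R"
    using assms(3,4) AS unfolding span_R by auto
  moreover have "x \<notin> vec.span (insert c ?R)"
  proof
    assume "x \<in> vec.span (insert c ?R)"
    then obtain k y where "x - k *s c = S *v y"
      unfolding vec.span_insert span_R by auto
    then have "y = 0"
      by (metis AS assms(3,5) diff_zero matrix_vector_mult_diff_distrib vector_smult_rzero vec.scale)
    then show False using not_multiple \<open>x - k *s c = S *v y\<close> by simp
  qed
  ultimately have "vec.dim (insert x (insert c ?R)) = vec.dim ?R + 2"
    by (simp add: vec.dim_insert)
  moreover have "vec.dim (insert x (insert c ?R)) \<le> CARD('n)"
    using vec.dim_subset_UNIV by (simp add: vec.dimension_def card_cart_basis)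
  ultimately show False using dim_R assms(2) by simp
qed

lemma proj_class_smult:
  assumes "k \<noteq> 0"
  shows "proj_class (k *s v) = proj_class v"
  unfolding proj_class_def
proof (intro set_eqI iffI)
  fix x assume "x \<in> {c *s (k *s v) |c. c \<noteq> 0}"
  then show "x \<in> {c *s v |c. c \<noteq> 0}"
    using assms by auto
next
  fix x assume "x \<in> {c *s v |c. c \<noteq> 0}"
  then obtain c where "c \<noteq> 0" "x = (c / k) *s (k *s v)"
    using assms by auto
  then show "x \<in> {c *s (k *s v) |c. c \<noteq> 0}"
    using assms by (metis (mono_tags, lifting) divide_eq_0_iff mem_Collect_eq)
qed

lemma proj_class_eq_imp_multiple:
  assumes "proj_class x = proj_class y"
  shows "\<exists>k. x = k *s y"
proof -
  have "x \<in> proj_class x"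
    unfolding proj_class_def by (metis (mono_tags, lifting) mem_Collect_eq one_neq_zero vector_smult_lid)
  then show ?thesis using assms unfolding proj_class_def by blast
qed

lemma base_pointsI: "x \<noteq> 0 \<Longrightarrow> cmap F x = 0 \<Longrightarrow> proj_class x \<in> base_points F"
  by (auto simp: base_points_def)

lemma cmap_smult: "cmap F (k *s x) = k\<^sup>2 *s cmap F x"
  by (simp add: cmap_def qform_eq_bform vec_eq_iff power2_eq_square)

section \<open>Orthonormal frames adapted to two points of a quadric\<close>

text \<open>\<open>P\<close> is the projection onto the orthogonal complement of \<open>C\<close> along \<open>span C\<close>.
  Were that complement totally isotropic, polarization and nondegeneracy would make it zero,
  so \<open>C\<close> would span the whole space.\<close>

lemma exists_anisotropic_orthogonal:
  fixes M :: "complex^'n^'n" and C :: "(complex^'n) set"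
  assumes sym: "transpose M = M" and det: "det M \<noteq> 0"
    and finite: "finite C" and card: "card C < CARD('n)"
    and P_orthogonal: "\<And>x c. c \<in> C \<Longrightarrow> bform M c (P x) = 0"
    and P_residual: "\<And>x. x - P x \<in> vec.span C"
  obtains w where "\<forall>c\<in>C. bform M c w = 0" and "bform M w w \<noteq> 0"
proof (rule ccontr)
  assume "\<not> thesis"
  note no_witness = this that
  have isotropic: "bform M w w = 0" if "\<forall>c\<in>C. bform M c w = 0" for w
    using no_witness that by blast
  have "w = 0" if w_orth: "\<forall>c\<in>C. bform M c w = 0" for w
  proof (rule bform_nondegenerate[OF det])
    fix y
    have "\<forall>c\<in>C. bform M w c = 0"
      using w_orth bform_commute[OF sym] by metis
    then have "bform M w (y - P y) = 0"
      by (rule bform_orthogonal_span[OF _ P_residual])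
    moreover have "bform M w (P y) = 0"
    proof -
      have "bform M (w + P y) (w + P y) = 0"
        by (rule isotropic) (simp add: w_orth P_orthogonal)
      moreover have "bform M w w = 0" "bform M (P y) (P y) = 0"
        using isotropic w_orth P_orthogonal by simp_all
      ultimately show ?thesis
        using bform_commute[OF sym, of "P y" w] by simp
    qed
    ultimately have "bform M w y = 0"
      by (simp add: algebra_simps)
    then show "bform M y w = 0"
      using bform_commute[OF sym] by metis
  qed
  then have "P x = 0" for x
    using P_orthogonal by blast
  then have "x \<in> vec.span C" for x
    using P_residual[of x] by simp
  then have "CARD('n) \<le> card C"
    using vec.dim_le_card[OF _ finite, of UNIV] by (auto simp: card_cart_basis)
  then show False using card by simp
qed

lemma exists_normalized_multiple:
  fixes M :: "complex^'n^'n"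
  assumes "bform M w w \<noteq> 0"
  obtains k where "bform M (k *s w) (k *s w) = 1"
proof
  let ?r = "csqrt (bform M w w)"
  have "?r \<noteq> 0" using assms by simp
  then show "bform M ((1 / ?r) *s w) ((1 / ?r) *s w) = 1"
    by (simp add: field_simps flip: power2_eq_square)
qed

definition adapted_frame ::
    "'a::comm_ring_1^'n^'n \<Rightarrow> 'a^'n \<Rightarrow> 'a^'n \<Rightarrow> 'a^'n \<Rightarrow> 'a^'n \<Rightarrow> bool" where
  "adapted_frame M c1 c2 u v \<longleftrightarrow>
     bform M c1 u = 0 \<and> bform M c2 u = 0 \<and> bform M c1 v = 0 \<and> bform M c2 v = 0 \<and>
     bform M u v = 0 \<and> bform M u u = 1 \<and> bform M v v = 1"

lemma exists_adapted_frame: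
  fixes M :: "complex^'n^'n"
  assumes sym: "transpose M = M" and det: "det M \<noteq> 0" and dim: "4 \<le> CARD('n)"
    and c1: "bform M c1 c1 = 0" and c2: "bform M c2 c2 = 0" and c12: "bform M c1 c2 \<noteq> 0"
  obtains u v where "adapted_frame M c1 c2 u v"
proof -
  note commute = bform_commute[OF sym]
  define \<beta> where "\<beta> = bform M c1 c2"
  have c21: "bform M c2 c1 = \<beta>" using commute \<beta>_def by metis
  have "\<beta> \<noteq> 0" using c12 \<beta>_def by simp
  define P where "P x = x - (bform M c2 x / \<beta>) *s c1 - (bform M c1 x / \<beta>) *s c2" for x
  obtain u0 where u0: "bform M c1 u0 = 0" "bform M c2 u0 = 0" "bform M u0 u0 \<noteq> 0"
  proof (rule exists_anisotropic_orthogonal[OF sym det, of "{c1, c2}" P])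
    have "card {c1, c2} \<le> 2"
      by (simp add: card_insert_if)
    then show "card {c1, c2} < CARD('n)"
      using dim by linarith
    show "bform M c (P x) = 0" if "c \<in> {c1, c2}" for x c
      using that \<open>\<beta> \<noteq> 0\<close> by (auto simp: P_def c1 c2 c21 \<beta>_def[symmetric])
    show "x - P x \<in> vec.span {c1, c2}" for x
      by (simp add: P_def vec.span_add vec.span_scale vec.span_base)
  qed (use that in auto)
  define \<alpha> where "\<alpha> = bform M u0 u0"
  have u0c: "bform M u0 c1 = 0" "bform M u0 c2 = 0" using u0 commute by metis+
  define P' where "P' x = P x - (bform M u0 (P x) / \<alpha>) *s u0" for x
  obtain v0 where v0: "bform M c1 v0 = 0" "bform M c2 v0 = 0" "bform M u0 v0 = 0"
    "bform M v0 v0 \<noteq> 0"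
  proof (rule exists_anisotropic_orthogonal[OF sym det, of "{c1, c2, u0}" P'])
    have "card {c1, c2, u0} \<le> 3"
      by (simp add: card_insert_if)
    then show "card {c1, c2, u0} < CARD('n)"
      using dim by linarith
    show "bform M c (P' x) = 0" if "c \<in> {c1, c2, u0}" for x c
      using that \<open>\<beta> \<noteq> 0\<close> u0 u0c \<alpha>_def
      by (auto simp: P'_def P_def c1 c2 c21 \<beta>_def[symmetric])
    show "x - P' x \<in> vec.span {c1, c2, u0}" for x
      by (simp add: P'_def P_def vec.span_add vec.span_scale vec.span_base)
  qed (use that in auto)
  obtain k where k: "bform M (k *s u0) (k *s u0) = 1"
    using exists_normalized_multiple u0(3) by blast
  obtain l where l: "bform M (l *s v0) (l *s v0) = 1"
    using exists_normalized_multiple v0(4) by blast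
  show thesis
    by (rule that[of "k *s u0" "l *s v0"]) (use k l in \<open>simp_all add: adapted_frame_def u0 v0\<close>)
qed

lemma adapted_frame_spans:
  fixes M :: "complex^'n^'n"
  assumes dim: "CARD('n) = 4" and sym: "transpose M = M"
    and c1: "bform M c1 c1 = 0" and c12: "bform M c1 c2 \<noteq> 0"
    and frame: "adapted_frame M c1 c2 u v"
  shows "\<exists>a b s t. x = a *s c1 + b *s c2 + s *s u + t *s v"
proof -
  have orth: "\<forall>y\<in>{c1}. bform M c1 y = 0" "\<forall>y\<in>{c2, c1}. bform M u y = 0"
    "\<forall>y\<in>{u, c2, c1}. bform M v y = 0"
    using c1 frame bform_commute[OF sym] by (auto simp: adapted_frame_def)
  let ?T = "insert v (insert u (insert c2 {c1}))"
  have "c1 \<noteq> 0" using c12 by auto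
  moreover have "c2 \<notin> vec.span {c1}"
    using bform_orthogonal_span[OF orth(1)] c12 by blast
  moreover have "u \<notin> vec.span {c2, c1}"
    using bform_orthogonal_span[OF orth(2), of u] frame by (auto simp: adapted_frame_def)
  moreover have "v \<notin> vec.span {u, c2, c1}"
    using bform_orthogonal_span[OF orth(3), of v] frame by (auto simp: adapted_frame_def)
  ultimately have "vec.dim ?T = CARD('n)"
    by (simp add: vec.dim_insert dim)
  then have "x \<in> vec.span ?T"
    using vec.dim_eq_full[of ?T] by (simp add: vec.dimension_def card_cart_basis)
  then obtain t s b a where "x - t *s v - s *s u - b *s c2 - a *s c1 = 0"
    by (auto simp: vec.span_insert)
  then have "x = a *s c1 + b *s c2 + s *s u + t *s v"
    by (simp add: algebra_simps)
  then show ?thesis by blast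
qed

lemma adapted_frame_isotropic_coordinates:
  fixes M :: "complex^'n^'n"
  assumes sym: "transpose M = M" and c1: "bform M c1 c1 = 0" and c12: "bform M c1 c2 \<noteq> 0"
    and frame: "adapted_frame M c1 c2 u v"
    and e: "e = a *s c1 + b *s c2 + s *s u + t *s v"
    and orth: "bform M c1 e = 0" and isotropic: "bform M e e = 0"
  shows "b = 0" and "s = \<i> * t \<or> s = - \<i> * t"
proof -
  have uv: "bform M u c1 = 0" "bform M v c1 = 0" "bform M v u = 0"
    using frame bform_commute[OF sym] by (metis adapted_frame_def)+
  show b: "b = 0"
    using frame c1 c12 orth by (simp add: e adapted_frame_def)
  have "(s - \<i> * t) * (s + \<i> * t) = 0"
    using isotropic uv b frame c1 by (simp add: e adapted_frame_def algebra_simps)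
  then show "s = \<i> * t \<or> s = - \<i> * t"
    by (simp add: eq_neg_iff_add_eq_0)
qed

lemma line_in_quadric_iff:
  assumes "transpose M = M" and "bform M c c = 0"
  shows "line_in_quadric M c d
    \<longleftrightarrow> (\<forall>a. d \<noteq> a *s c) \<and> bform M c d = 0 \<and> bform M d d = 0"
proof -
  have expand: "qform M (a *s c + b *s d) = 2 * a * b * bform M c d + b * b * bform M d d" for a b
    using assms by (simp add: qform_eq_bform bform_commute[of M d c] algebra_simps)
  show ?thesis
  proof
    assume "line_in_quadric M c d"
    then have "(\<forall>a. d \<noteq> a *s c) \<and> qform M (0 *s c + 1 *s d) = 0
        \<and> qform M (1 *s c + 1 *s d) = 0"
      unfolding line_in_quadric_def by blast
    then show "(\<forall>a. d \<noteq> a *s c) \<and> bform M c d = 0 \<and> bform M d d = 0"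
      by (simp only: expand) auto
  qed (simp add: line_in_quadric_def expand)
qed

lemma permissible_quadric_swap: "permissible_quadric M c1 c2 \<Longrightarrow> permissible_quadric M c2 c1"
  unfolding permissible_quadric_def by (metis add.commute)

section \<open>The quadratic map defined by a quadric\<close>

text \<open>For \<open>c\<close> on the quadric, the line through \<open>c\<close> and \<open>q\<close> meets the quadric
  a second time in this point.\<close>

definition second_intersection :: "'a::comm_ring_1^'n^'n \<Rightarrow> 'a^'n \<Rightarrow> 'a^'n \<Rightarrow> 'a^'n" where
  "second_intersection M c q = (2 * bform M c q) *s q - bform M q q *s c"

lemma second_intersection_isotropic:
  assumes "transpose M = M" and "bform M c c = 0"
  shows "bform M (second_intersection M c q) (second_intersection M c q) = 0"
  using assms by (simp add: second_intersection_def bform_commute[of M q c] algebra_simps)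

lemma second_intersection_through_isotropic:
  assumes "transpose M = M" and "bform M c c = 0" and "bform M p p = 0"
  shows "second_intersection M c (p + t *s c) = (2 * bform M c p) *s p"
  using assms
  by (simp add: second_intersection_def bform_commute[of M p c] vec_eq_iff algebra_simps)

text \<open>These quadrics come from expanding \<open>A *v second_intersection M c (S *v x)\<close> in \<open>x\<close>.\<close>

definition cremona_quadrics ::
    "'a::comm_ring_1^'n^'n \<Rightarrow> 'a^'m^'n \<Rightarrow> 'a^'n^'k \<Rightarrow> 'a^'n \<Rightarrow> 'a^'m^'m^'k" where
  "cremona_quadrics M S A c =
     (let m = transpose S *v (M *v c); H = transpose S ** M ** S
      in \<chi> k i j. m $ i * (A ** S) $ k $ j + (A ** S) $ k $ i * m $ j - (A *v c) $ k * H $ i $ j)"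

lemma qform_symmetrized_product:
  "qform (\<chi> i j. m $ i * g $ j + g $ i * m $ j - a * H $ i $ j) x
     = 2 * vdot m x * vdot g x - a * qform H x"
proof -
  have "(\<chi> i j. m $ i * g $ j + g $ i * m $ j - a * H $ i $ j) *v x
      = vdot g x *s m + vdot m x *s g - a *s (H *v x)"
    by (simp add: vec_eq_iff matrix_vector_mult_def vdot_def sum.distrib sum_subtractf
        sum_distrib_left algebra_simps)
  then have "qform (\<chi> i j. m $ i * g $ j + g $ i * m $ j - a * H $ i $ j) x
      = vdot x (vdot g x *s m + vdot m x *s g - a *s (H *v x))"
    by (simp only: qform_eq_bform bform_def)
  then show ?thesis
    by (simp add: qform_eq_bform bform_def vdot_commute[of x])
qed

lemma cmap_cremona_quadrics:
  fixes M :: "complex^'n^'n" and S :: "complex^3^'n" and A :: "complex^'n^3"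
  assumes sym: "transpose M = M"
  shows "cmap (cremona_quadrics M S A c) x = A *v second_intersection M c (S *v x)"
proof -
  have "vdot (transpose S *v (M *v c)) x = vdot (M *v c) (S *v x)"
    by (simp only: vdot_commute[of _ x] vdot_matrix_vector_mult transpose_transpose)
  also have "\<dots> = bform M (S *v x) c"
    unfolding bform_def by (rule vdot_commute)
  also have "\<dots> = bform M c (S *v x)"
    by (rule bform_commute[OF sym])
  finally have m: "vdot (transpose S *v (M *v c)) x = bform M c (S *v x)" .
  have g: "vdot ((A ** S) $ k) x = (A *v (S *v x)) $ k" for k
    by (simp add: matrix_vector_mult_nth_vdot matrix_vector_mul_assoc)
  have H: "qform (transpose S ** M ** S) x = qform M (S *v x)"
    by (simp only: qform_eq_bform bform_def matrix_vector_mul_assoc[symmetric]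
        vdot_matrix_vector_mult transpose_transpose)
  have "qform (cremona_quadrics M S A c $ k) x
      = 2 * vdot (transpose S *v (M *v c)) x * vdot ((A ** S) $ k) x
        - (A *v c) $ k * qform (transpose S ** M ** S) x" for k
    unfolding cremona_quadrics_def Let_def vec_lambda_beta by (rule qform_symmetrized_product)
  then have "qform (cremona_quadrics M S A c $ k) x
      = 2 * bform M c (S *v x) * (A *v (S *v x)) $ k - (A *v c) $ k * qform M (S *v x)" for k
    by (simp only: m g H)
  then show ?thesis
    by (simp add: cmap_def vec_eq_iff second_intersection_def qform_eq_bform vec.diff vec.scale
        mult.commute)
qed

lemma transpose_symmetrized_product:
  fixes H :: "'a::comm_ring_1^'n^'n"
  assumes "transpose H = H"
  shows "transpose (\<chi> i j. m $ i * g $ j + g $ i * m $ j - a * H $ i $ j)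
    = (\<chi> i j. m $ i * g $ j + g $ i * m $ j - a * H $ i $ j)"
proof -
  have "H $ j $ i = H $ i $ j" for i j
    using arg_cong[OF assms, of "\<lambda>B. B $ j $ i"] by (simp add: transpose_def)
  then show ?thesis
    by (simp add: transpose_def vec_eq_iff algebra_simps)
qed

lemma quad_map_cremona_quadrics:
  assumes "transpose M = M"
  shows "quad_map (cremona_quadrics M S A c)"
  unfolding quad_map_def cremona_quadrics_def Let_def vec_lambda_beta
  by (intro allI transpose_symmetrized_product)
    (simp add: matrix_transpose_mul assms matrix_mul_assoc)

section \<open>The Cremona transformation of a pair of projections\<close>

locale projection_pair =
  fixes M :: "complex^4^4" and A1 A2 :: "complex^4^3" and c1 c2 :: "complex^4"
  assumes projection1: "linear_projection A1 c1"
    and projection2: "linear_projection A2 c2"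
    and permissible: "permissible_quadric M c1 c2"
begin

text \<open>\<open>lift\<close> is any right inverse of \<open>A1\<close>: it picks a point of \<open>P\<^sup>3\<close> over each
  point of \<open>P\<^sup>2\<close>; \<open>cremona\<close> projects the second intersection of the line through
  \<open>c1\<close> and that point.\<close>

definition lift :: "complex^3^4" where
  "lift = (SOME S. A1 ** S = mat 1)"

definition cremona :: "complex^3^3^3" where
  "cremona = cremona_quadrics M lift A2 c1"

lemma symmetric: "transpose M = M"
  and det_nonzero: "det M \<noteq> 0"
  and isotropic_c1: "bform M c1 c1 = 0"
  and isotropic_c2: "bform M c2 c2 = 0"
  using permissible by (simp_all add: permissible_quadric_def smooth_quadric_def qform_eq_bform)

lemma bform_c1_c2_nonzero: "bform M c1 c2 \<noteq> 0"
proof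
  assume "bform M c1 c2 = 0"
  then have "qform M (a *s c1 + b *s c2) = 0" for a b
    using isotropic_c1 isotropic_c2 bform_commute[OF symmetric, of c2 c1]
    by (simp add: qform_eq_bform)
  then show False
    using permissible by (simp add: permissible_quadric_def)
qed

lemma A1_lift: "A1 *v (lift *v x) = x"
proof -
  have "\<exists>S. A1 ** S = mat 1"
    using projection1 by (intro full_row_rank_right_invertible) (simp add: linear_projection_def)
  then have "A1 ** lift = mat 1"
    unfolding lift_def by (rule someI_ex)
  then show ?thesis
    by (simp add: matrix_vector_mul_assoc)
qed

lemma kernel_A1: "A1 *v x = 0 \<longleftrightarrow> (\<exists>k. x = k *s c1)"
proof
  have "A1 ** lift = mat 1"
    using A1_lift by (metis matrix_eq matrix_vector_mul_assoc matrix_vector_mul_lid)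
  then show "A1 *v x = 0 \<Longrightarrow> \<exists>k. x = k *s c1"
    using projection1 by (intro right_invertible_kernel_is_line) (auto simp: linear_projection_def)
qed (use projection1 in \<open>auto simp: linear_projection_def vec.scale\<close>)

lemma A1_c1: "A1 *v c1 = 0"
  using projection1 by (simp add: linear_projection_def)

lemma A1_nonzero_if_not_orthogonal: "bform M c1 p \<noteq> 0 \<Longrightarrow> A1 *v p \<noteq> 0"
  using kernel_A1 isotropic_c1 by auto

lemma proj_class_A1_eqD:
  assumes "proj_class (A1 *v x) = proj_class (A1 *v y)"
  shows "\<exists>k m. x = k *s y + m *s c1"
proof -
  obtain k where "A1 *v (x - k *s y) = 0"
    using proj_class_eq_imp_multiple[OF assms] by (auto simp: vec.diff vec.scale)
  then obtain m where "x - k *s y = m *s c1"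
    using kernel_A1 by blast
  then have "x = k *s y + m *s c1"
    by (simp add: algebra_simps)
  then show ?thesis by blast
qed

lemma cmap_cremona: "cmap cremona x = A2 *v second_intersection M c1 (lift *v x)"
  by (simp add: cremona_def cmap_cremona_quadrics symmetric)

lemma A1_second_intersection_lift:
  "A1 *v second_intersection M c1 (lift *v x) = (2 * bform M c1 (lift *v x)) *s x"
  by (simp add: second_intersection_def vec.diff vec.scale A1_lift A1_c1)

lemma cmap_cremona_A1_isotropic:
  assumes "bform M p p = 0"
  shows "cmap cremona (A1 *v p) = (2 * bform M c1 p) *s (A2 *v p)"
proof -
  obtain t where "lift *v (A1 *v p) - p = t *s c1"
    using kernel_A1 by (metis A1_lift vec.diff diff_self)
  then have "lift *v (A1 *v p) = p + t *s c1"
    by (simp add: algebra_simps)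
  then show ?thesis
    using assms by (simp add: cmap_cremona second_intersection_through_isotropic symmetric isotropic_c1
        vec.scale)
qed

lemma quad_map_cremona: "quad_map cremona"
  by (simp add: cremona_def quad_map_cremona_quadrics symmetric)

lemma cmap_cremona_proportional:
  assumes "on_quadric M p"
  shows "\<exists>a. cmap cremona (A1 *v p) = a *s (A2 *v p)"
proof -
  have "bform M p p = 0"
    using assms by (simp add: on_quadric_def qform_eq_bform)
  then show ?thesis
    using cmap_cremona_A1_isotropic by blast
qed

lemma exists_adapted_frame_of_centers:
  obtains u v where "adapted_frame M c1 c2 u v"
  using exists_adapted_frame[OF symmetric det_nonzero _ isotropic_c1 isotropic_c2
      bform_c1_c2_nonzero] by auto

lemma line_through_c1_in_adapted_frame:
  assumes frame: "adapted_frame M c1 c2 u v" and line: "line_in_quadric M c1 e"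
  shows "proj_class (A1 *v e) = proj_class (A1 *v (\<i> *s u + v))
    \<or> proj_class (A1 *v e) = proj_class (A1 *v ((- \<i>) *s u + v))"
proof -
  have e: "\<forall>a. e \<noteq> a *s c1" "bform M c1 e = 0" "bform M e e = 0"
    using line line_in_quadric_iff[OF symmetric isotropic_c1] by blast+
  obtain a b s t where e_eq: "e = a *s c1 + b *s c2 + s *s u + t *s v"
    using adapted_frame_spans[OF _ symmetric isotropic_c1 bform_c1_c2_nonzero frame, of e] by auto
  note coords = adapted_frame_isotropic_coordinates[OF symmetric isotropic_c1
      bform_c1_c2_nonzero frame e_eq e(2,3)]
  have "t \<noteq> 0"
    using e(1) coords by (auto simp: e_eq)
  from coords(2) consider "s = \<i> * t" | "s = - \<i> * t"
    by blast
  then show ?thesis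
  proof cases
    case 1
    then have "A1 *v e = t *s (A1 *v (\<i> *s u + v))"
      using coords(1) A1_c1 by (simp add: e_eq vec.add vec.scale vec_eq_iff algebra_simps)
    then show ?thesis
      using \<open>t \<noteq> 0\<close> by (simp add: proj_class_smult)
  next
    case 2
    then have "A1 *v e = t *s (A1 *v ((- \<i>) *s u + v))"
      using coords(1) A1_c1 by (simp add: e_eq vec.add vec.scale vec_eq_iff algebra_simps)
    then show ?thesis
      using \<open>t \<noteq> 0\<close> by (simp add: proj_class_smult)
  qed
qed

lemma lines_through_c1:
  obtains d d' where
    "{proj_class (A1 *v e) | e. line_in_quadric M c1 e} = {proj_class (A1 *v d), proj_class (A1 *v d')}"
    "proj_class (A1 *v d) \<noteq> proj_class (A1 *v d')" "bform M c1 d = 0" "bform M c1 d' = 0"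
proof -
  obtain u v where frame: "adapted_frame M c1 c2 u v"
    by (rule exists_adapted_frame_of_centers)
  have uv: "bform M u c1 = 0" "bform M v c1 = 0" "bform M v u = 0"
    using frame bform_commute[OF symmetric] by (metis adapted_frame_def)+
  define d where "d = \<i> *s u + v"
  define d' where "d' = (- \<i>) *s u + v"
  have orth: "bform M c1 d = 0" "bform M c1 d' = 0"
    using frame by (simp_all add: d_def d'_def adapted_frame_def)
  have "line_in_quadric M c1 d" "line_in_quadric M c1 d'"
    using frame uv
    by (auto simp: line_in_quadric_iff[OF symmetric isotropic_c1] d_def d'_def adapted_frame_def
        dest: arg_cong[of _ _ "bform M u"])
  then have "{proj_class (A1 *v e) | e. line_in_quadric M c1 e}
      = {proj_class (A1 *v d), proj_class (A1 *v d')}"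
    using line_through_c1_in_adapted_frame[OF frame] unfolding d_def d'_def by blast
  moreover have "proj_class (A1 *v d) \<noteq> proj_class (A1 *v d')"
  proof
    assume "proj_class (A1 *v d) = proj_class (A1 *v d')"
    then obtain k m where "d = k *s d' + m *s c1"
      using proj_class_A1_eqD by blast
    then have "bform M u d = bform M u (k *s d' + m *s c1)" "bform M v d = bform M v (k *s d' + m *s c1)"
      by simp_all
    then show False
      using frame uv by (simp add: d_def d'_def adapted_frame_def)
  qed
  ultimately show thesis
    using that orth by blast
qed

lemma exists_isotropic_not_orthogonal_to_centers:
  obtains p where "bform M p p = 0" "bform M c1 p \<noteq> 0" "bform M c2 p \<noteq> 0"
proof -
  obtain u v where "adapted_frame M c1 c2 u v"
    by (rule exists_adapted_frame_of_centers)
  then have u: "bform M c1 u = 0" "bform M c2 u = 0" "bform M u u = 1"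
    by (simp_all add: adapted_frame_def)
  define \<beta> where "\<beta> = bform M c1 c2"
  have c21: "bform M c2 c1 = \<beta>" "bform M u c1 = 0" "bform M u c2 = 0"
    using u bform_commute[OF symmetric] \<beta>_def by metis+
  define r where "r = csqrt (- 2 * \<beta>)"
  have "r * r = - 2 * \<beta>"
    unfolding r_def by (metis power2_csqrt power2_eq_square)
  then show thesis
    using u c21 isotropic_c1 isotropic_c2 bform_c1_c2_nonzero
    by (intro that[of "c1 + c2 + r *s u"]) (simp_all add: \<beta>_def[symmetric])
qed

end

text \<open>Exchanging the two projections gives the inverse map.\<close>

sublocale projection_pair \<subseteq> swapped: projection_pair M A2 A1 c2 c1
  using projection2 projection1 permissible_quadric_swap[OF permissible]
  by (rule projection_pair.intro)

context projection_pair
begin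

lemma proj_class_A1_c2_neq:
  assumes "bform M c1 d = 0"
  shows "proj_class (A1 *v c2) \<noteq> proj_class (A1 *v d)"
proof
  assume "proj_class (A1 *v c2) = proj_class (A1 *v d)"
  then obtain k m where "c2 = k *s d + m *s c1"
    using proj_class_A1_eqD by blast
  then have "bform M c1 c2 = 0"
    using assms isotropic_c1 by simp
  then show False
    using bform_c1_c2_nonzero by contradiction
qed

lemma base_points_cremona:
  "base_points cremona = {proj_class (A1 *v c2)} \<union> {proj_class (A1 *v d) | d. line_in_quadric M c1 d}"
proof (intro set_eqI iffI)
  fix X
  assume "X \<in> base_points cremona"
  then obtain x where X: "X = proj_class x" and "x \<noteq> 0" and "cmap cremona x = 0"
    by (auto simp: base_points_def)
  define q where "q = lift *v x"
  have "A2 *v second_intersection M c1 q = 0"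
    using \<open>cmap cremona x = 0\<close> by (simp add: cmap_cremona q_def)
  then obtain \<mu> where \<mu>: "second_intersection M c1 q = \<mu> *s c2"
    using swapped.kernel_A1 by blast
  have "\<mu> * bform M c1 c2 = 2 * bform M c1 q * bform M c1 q"
    using arg_cong[OF \<mu>, of "bform M c1"] isotropic_c1 by (simp add: second_intersection_def)
  show "X \<in> {proj_class (A1 *v c2)} \<union> {proj_class (A1 *v d) | d. line_in_quadric M c1 d}"
  proof (cases "bform M c1 q = 0")
    case True
    then have "\<mu> = 0"
      using \<open>\<mu> * bform M c1 c2 = _\<close> bform_c1_c2_nonzero by simp
    then have "bform M q q = 0"
      using \<mu> True projection1 by (simp add: second_intersection_def linear_projection_def)
    moreover have "\<forall>a. q \<noteq> a *s c1"
      using \<open>x \<noteq> 0\<close> A1_lift[of x] A1_c1 by (auto simp: q_def vec.scale)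
    ultimately have "line_in_quadric M c1 q"
      using True line_in_quadric_iff[OF symmetric isotropic_c1] by blast
    moreover have "X = proj_class (A1 *v q)"
      using X by (simp add: q_def A1_lift)
    ultimately show ?thesis
      by blast
  next
    case False
    have "(2 * bform M c1 q) *s x = \<mu> *s (A1 *v c2)"
      using arg_cong[OF \<mu>, of "(*v) A1"] by (simp add: A1_second_intersection_lift q_def vec.scale)
    then have "(1 / (2 * bform M c1 q)) *s ((2 * bform M c1 q) *s x)
        = (1 / (2 * bform M c1 q)) *s (\<mu> *s (A1 *v c2))"
      by simp
    then have "x = (\<mu> / (2 * bform M c1 q)) *s (A1 *v c2)"
      using False by simp
    moreover from this have "\<mu> \<noteq> 0"
      using \<open>x \<noteq> 0\<close> by auto
    ultimately show ?thesis
      using X False by (simp add: proj_class_smult)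
  qed
next
  fix X
  assume "X \<in> {proj_class (A1 *v c2)} \<union> {proj_class (A1 *v d) | d. line_in_quadric M c1 d}"
  then consider "X = proj_class (A1 *v c2)"
    | d where "X = proj_class (A1 *v d)" and "line_in_quadric M c1 d"
    by blast
  then show "X \<in> base_points cremona"
  proof cases
    case 1
    have "cmap cremona (A1 *v c2) = 0"
      using cmap_cremona_A1_isotropic[OF isotropic_c2] swapped.A1_c1 by simp
    then show ?thesis
      using 1 A1_nonzero_if_not_orthogonal[OF bform_c1_c2_nonzero] by (simp add: base_pointsI)
  next
    case (2 d)
    then have d: "\<forall>a. d \<noteq> a *s c1" "bform M c1 d = 0" "bform M d d = 0"
      using line_in_quadric_iff[OF symmetric isotropic_c1] by blast+
    have "cmap cremona (A1 *v d) = 0"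
      using cmap_cremona_A1_isotropic[OF d(3)] d(2) by simp
    moreover have "A1 *v d \<noteq> 0"
      using kernel_A1 d(1) by blast
    ultimately show ?thesis
      using 2 by (simp add: base_pointsI)
  qed
qed

lemma nondegenerate_cremona: "nondegenerate cremona"
proof -
  obtain d d' where lines:
    "{proj_class (A1 *v e) | e. line_in_quadric M c1 e} = {proj_class (A1 *v d), proj_class (A1 *v d')}"
    "proj_class (A1 *v d) \<noteq> proj_class (A1 *v d')" "bform M c1 d = 0" "bform M c1 d' = 0"
    by (rule lines_through_c1)
  have "base_points cremona = insert (proj_class (A1 *v c2)) {proj_class (A1 *v d), proj_class (A1 *v d')}"
    unfolding base_points_cremona lines(1) by (rule insert_is_Un[symmetric])
  moreover have "proj_class (A1 *v c2) \<notin> {proj_class (A1 *v d), proj_class (A1 *v d')}"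
    using proj_class_A1_c2_neq[OF lines(3)] proj_class_A1_c2_neq[OF lines(4)] by blast
  ultimately show ?thesis
    using lines(2) by (simp add: nondegenerate_def)
qed

lemma cremona_comp_proportional: "\<exists>a. cmap swapped.cremona (cmap cremona x) = a *s x"
proof -
  let ?p = "second_intersection M c1 (lift *v x)"
  have "cmap swapped.cremona (cmap cremona x) = (2 * bform M c2 ?p) *s (A1 *v ?p)"
    by (simp add: cmap_cremona swapped.cmap_cremona_A1_isotropic second_intersection_isotropic symmetric
        isotropic_c1)
  also have "\<dots> = (2 * bform M c2 ?p * (2 * bform M c1 (lift *v x))) *s x"
    by (simp add: A1_second_intersection_lift)
  finally show ?thesis by blast
qed

lemma cremona_comp_nonzero: "\<exists>x. cmap swapped.cremona (cmap cremona x) \<noteq> 0"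
proof -
  obtain p where p: "bform M p p = 0" "bform M c1 p \<noteq> 0" "bform M c2 p \<noteq> 0"
    by (rule exists_isotropic_not_orthogonal_to_centers)
  have "cmap swapped.cremona (cmap cremona (A1 *v p))
      = ((2 * bform M c1 p)\<^sup>2 * (2 * bform M c2 p)) *s (A1 *v p)"
    using p(1) by (simp add: cmap_cremona_A1_isotropic swapped.cmap_cremona_A1_isotropic cmap_smult)
  also have "\<dots> \<noteq> 0"
    using p A1_nonzero_if_not_orthogonal by simp
  finally show ?thesis by blast
qed

end

context projection_pair
begin

lemma quad_cremona_swapped: "quad_cremona cremona swapped.cremona"
proof -
  have "inverse_rational cremona swapped.cremona"
    unfolding inverse_rational_def
    by (intro conjI allI) (fact cremona_comp_proportional swapped.cremona_comp_proportional
      cremona_comp_nonzero swapped.cremona_comp_nonzero)+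
  then show ?thesis
    using quad_map_cremona swapped.quad_map_cremona by (simp add: quad_cremona_def)
qed

end

theorem mainTheorem12:
  fixes A1 A2 :: "complex^4^3" and c1 c2 :: "complex^4" and M :: "complex^4^4"
  assumes "linear_projection A1 c1"
    and "linear_projection A2 c2"
    and "proj_class c1 \<noteq> proj_class c2"
    and "permissible_quadric M c1 c2"
  shows "\<exists>F G. quad_cremona F G \<and> nondegenerate F \<and> nondegenerate G
    \<and> (\<forall>p. on_quadric M p \<and> cmap F (A1 *v p) \<noteq> 0
            \<longrightarrow> (\<exists>a. cmap F (A1 *v p) = a *s (A2 *v p)))
    \<and> base_points F = {proj_class (A1 *v c2)} \<union> {proj_class (A1 *v d) | d. line_in_quadric M c1 d}
    \<and> base_points G = {proj_class (A2 *v c1)} \<union> {proj_class (A2 *v d) | d. line_in_quadric M c2 d}"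
proof -
  \<comment> \<open>Distinctness of the centers follows from permissibility: \<open>c1\<close> is isotropic
    but not orthogonal to \<open>c2\<close>.\<close>
  interpret projection_pair M A1 A2 c1 c2
    using assms(1,2,4) by (rule projection_pair.intro)
  show ?thesis
  proof (rule exI[of _ cremona], rule exI[of _ swapped.cremona], intro conjI allI impI)
    fix p
    assume "on_quadric M p \<and> cmap cremona (A1 *v p) \<noteq> 0"
    then show "\<exists>a. cmap cremona (A1 *v p) = a *s (A2 *v p)"
      using cmap_cremona_proportional by blast
  qed (fact quad_cremona_swapped nondegenerate_cremona swapped.nondegenerate_cremona
      base_points_cremona swapped.base_points_cremona)+
qed

end
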